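(* For all $n\ge 0$, $|F_n(321,2143,4123)|=\binom{n}{2}+1$.
   Context: A permutation $\pi$ avoids a classical pattern $p\in S_k$ if no subsequence of $\pi$ of length $k$ is order-isomorphic to $p$. A Fishburn permutation is a permutation $\pi=\pi_1\cdots\pi_n$ of $[n]$ for which there are no indices $i<j$ with $\pi_j<\pi_i<\pi_{i+1}$ and $\pi_i=\pi_j+1$. $F_n(\sigma_1,\dots,\sigma_k)$ denotes the set of Fishburn permutations of length $n$ avoiding each of the classical patterns $\sigma_1,\dots,\sigma_k$ (with $F_0$ containing only the empty permutation). *)

theory Defs
  imports Main
begin

text \<open>Permutations of [n] = {1..n} in one-line notation, as lists
  (position i, 0-based, holds the value pi_(i+1)).\<close>

definition perms_of :: "nat \<Rightarrow> nat list set" where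
  "perms_of n = {xs. distinct xs \<and> set xs = {1..n}}"

definition contains :: "nat list \<Rightarrow> nat list \<Rightarrow> bool" where
  "contains w p \<longleftrightarrow>
     (\<exists>f :: nat \<Rightarrow> nat. strict_mono_on {..<length p} f \<and>
        (\<forall>j<length p. f j < length w) \<and>
        (\<forall>a<length p. \<forall>b<length p. (w ! f a < w ! f b) \<longleftrightarrow> (p ! a < p ! b)))"

definition avoids :: "nat list \<Rightarrow> nat list \<Rightarrow> bool" where
  "avoids w p \<longleftrightarrow> \<not> contains w p"

definition fishburn :: "nat list \<Rightarrow> bool" where
  "fishburn w \<longleftrightarrow>
     \<not> (\<exists>i j. i < j \<and> j < length w \<and> Suc i < length w \<and>
            w ! j < w ! i \<and> w ! i < w ! Suc i \<and> w ! i = w ! j + 1)"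

definition F :: "nat \<Rightarrow> nat list list \<Rightarrow> nat list set" where
  "F n ps = {w \<in> perms_of n. fishburn w \<and> (\<forall>p\<in>set ps. avoids w p)}"

end

theory Submission
  imports Defs
begin

(* A permutation of the class either starts with 1, and is then 1 \<oplus> v for some v of the class
   of length n (none of 321, 2143, 4123 starts with its smallest letter, and a new minimal first
   entry cannot create a Fishburn pattern), or it starts with some a \<noteq> 1. In the second case
   avoiding 321 and 4123 forces a \<in> {2,3}; the Fishburn condition applied to the entries a and
   a - 1 forces the second entry to be 1; and avoiding 2143 forces the entries larger than a to
   appear in increasing order. Only 2 1 3 4 ... (n+1) and the n - 1 permutations
   3 1 4 ... 2 ... (n+1) remain, so |F_(n+1)| = |F_n| + n. *)

lemma contains_iff_indices:
  "contains w p \<longleftrightarrow>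
     (\<exists>ix. length ix = length p \<and> sorted_wrt (<) ix \<and> (\<forall>i\<in>set ix. i < length w) \<and>
        (\<forall>a<length p. \<forall>b<length p. (w ! (ix ! a) < w ! (ix ! b)) \<longleftrightarrow> (p ! a < p ! b)))"
  (is "_ \<longleftrightarrow> (\<exists>ix. ?P ix)")
proof
  assume "contains w p"
  then obtain f where "strict_mono_on {..<length p} f" "\<forall>j<length p. f j < length w"
    "\<forall>a<length p. \<forall>b<length p. (w ! f a < w ! f b) \<longleftrightarrow> (p ! a < p ! b)"
    unfolding contains_def by blast
  then show "\<exists>ix. ?P ix"
    by (intro exI[of _ "map f [0..<length p]"]) (auto simp: sorted_wrt_iff_nth_less strict_mono_on_def)
next
  assume "\<exists>ix. ?P ix"
  then obtain ix where "length ix = length p" "sorted_wrt (<) ix" "\<forall>i\<in>set ix. i < length w"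
    "\<forall>a<length p. \<forall>b<length p. (w ! (ix ! a) < w ! (ix ! b)) \<longleftrightarrow> (p ! a < p ! b)"
    by blast
  then show "contains w p"
    unfolding contains_def
    by (intro exI[of _ "(!) ix"]) (auto simp: sorted_wrt_iff_nth_less strict_mono_on_def)
qed

lemma contains_by_indices:
  assumes "distinct p" "length ix = length p" "sorted_wrt (<) ix" "\<forall>i\<in>set ix. i < length w"
    and "\<forall>a<length p. \<forall>b<length p. p ! a < p ! b \<longrightarrow> w ! (ix ! a) < w ! (ix ! b)"
  shows "contains w p"
  unfolding contains_iff_indices
proof (intro exI conjI allI impI iffI)
  fix a b assume ab: "a < length p" "b < length p" and "w ! (ix ! a) < w ! (ix ! b)"
  then show "p ! a < p ! b"
    using assms(1,5) by (metis linorder_neqE_nat nth_eq_iff_index_eq order.asym)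
qed (use assms in auto)

lemma ex_length_Suc_conv:
  "(\<exists>xs. length xs = Suc n \<and> P xs) \<longleftrightarrow> (\<exists>x xs. length xs = n \<and> P (x # xs))"
  by (metis length_Suc_conv)

lemma ex_length_0_conv: "(\<exists>xs. length xs = 0 \<and> P xs) \<longleftrightarrow> P []"
  by auto

lemmas pattern_simps = ex_length_Suc_conv ex_length_0_conv All_less_Suc2 numeral_eq_Suc

lemma contains_321:
  "contains w [3,2,1] \<longleftrightarrow> (\<exists>i j k. i < j \<and> j < k \<and> k < length w \<and> w!j < w!i \<and> w!k < w!j)"
  (is "_ \<longleftrightarrow> (\<exists>i j k. ?Q i j k)")
proof
  assume "contains w [3,2,1]"
  then show "\<exists>i j k. ?Q i j k" unfolding contains_iff_indices by (simp add: pattern_simps) blast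
next
  assume "\<exists>i j k. ?Q i j k"
  then obtain i j k where "?Q i j k" by blast
  then show "contains w [3,2,1]"
    by (intro contains_by_indices[of _ "[i,j,k]"]) (auto simp: pattern_simps)
qed

lemma contains_2143:
  "contains w [2,1,4,3] \<longleftrightarrow>
     (\<exists>i j k l. i < j \<and> j < k \<and> k < l \<and> l < length w \<and> w!j < w!i \<and> w!i < w!l \<and> w!l < w!k)"
  (is "_ \<longleftrightarrow> (\<exists>i j k l. ?Q i j k l)")
proof
  assume "contains w [2,1,4,3]"
  then show "\<exists>i j k l. ?Q i j k l" unfolding contains_iff_indices by (simp add: pattern_simps) blast
next
  assume "\<exists>i j k l. ?Q i j k l"
  then obtain i j k l where "?Q i j k l" by blast
  then show "contains w [2,1,4,3]"
    by (intro contains_by_indices[of _ "[i,j,k,l]"]) (auto simp: pattern_simps)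
qed

lemma contains_4123:
  "contains w [4,1,2,3] \<longleftrightarrow>
     (\<exists>i j k l. i < j \<and> j < k \<and> k < l \<and> l < length w \<and> w!j < w!k \<and> w!k < w!l \<and> w!l < w!i)"
  (is "_ \<longleftrightarrow> (\<exists>i j k l. ?Q i j k l)")
proof
  assume "contains w [4,1,2,3]"
  then show "\<exists>i j k l. ?Q i j k l" unfolding contains_iff_indices by (simp add: pattern_simps) blast
next
  assume "\<exists>i j k l. ?Q i j k l"
  then obtain i j k l where "?Q i j k l" by blast
  then show "contains w [4,1,2,3]"
    by (intro contains_by_indices[of _ "[i,j,k,l]"]) (auto simp: pattern_simps)
qed

lemma contains_map_strict_mono:
  assumes "strict_mono g"
  shows "contains (map g w) p \<longleftrightarrow> contains w p"
proof -
  have "(map g w ! i < map g w ! j) \<longleftrightarrow> (w ! i < w ! j)" if "i < length w" "j < length w" for i j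
    using that strict_mono_less[OF assms] by simp
  then show ?thesis
    unfolding contains_def length_map by (intro ex_cong1 conj_cong refl) auto
qed

(* The hypothesis on p says that p does not start with its smallest letter, so no occurrence
   of p can use the new minimal first entry x. *)
lemma contains_Cons_least:
  assumes least: "\<forall>y\<in>set w. x \<le> y" and not_first_min: "\<exists>b<length p. p ! b < p ! 0"
  shows "contains (x # w) p \<longleftrightarrow> contains w p"
proof
  assume "contains (x # w) p"
  then obtain f where mono: "strict_mono_on {..<length p} f" and bound: "\<forall>j<length p. f j < Suc (length w)"
    and iso: "\<forall>a<length p. \<forall>b<length p. ((x # w) ! f a < (x # w) ! f b) \<longleftrightarrow> (p ! a < p ! b)"
    unfolding contains_def by auto
  obtain b where b: "b < length p" "p ! b < p ! 0" using not_first_min by blast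
  have "0 < f 0"
  proof (rule ccontr)
    assume "\<not> 0 < f 0"
    then have "(x # w) ! f 0 = x" by simp
    moreover have "x \<le> (x # w) ! f b"
      using least bound b(1) by (cases "f b") auto
    ultimately show False using iso[rule_format, of b 0] b by (cases p) auto
  qed
  then have pos: "0 < f j" if "j < length p" for j
    using strict_mono_onD[OF mono, of 0 j] that by (cases "j = 0") (auto simp flip: length_greater_0_conv)
  show "contains w p" unfolding contains_def
  proof (intro exI[of _ "\<lambda>j. f j - 1"] conjI allI impI)
    show "strict_mono_on {..<length p} (\<lambda>j. f j - 1)"
    proof (rule strict_mono_onI)
      fix r s assume "r \<in> {..<length p}" "s \<in> {..<length p}" "r < s"
      then show "f r - 1 < f s - 1" using strict_mono_onD[OF mono, of r s] pos[of r] by auto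
    qed
    fix a b assume "a < length p" "b < length p"
    then show "(w ! (f a - 1) < w ! (f b - 1)) \<longleftrightarrow> (p ! a < p ! b)"
      using iso pos by (metis Suc_diff_1 nth_Cons_Suc)
  qed (use bound pos in force)
next
  assume "contains w p"
  then obtain f where "strict_mono_on {..<length p} f" "\<forall>j<length p. f j < length w"
    "\<forall>a<length p. \<forall>b<length p. (w ! f a < w ! f b) \<longleftrightarrow> (p ! a < p ! b)"
    unfolding contains_def by blast
  then show "contains (x # w) p" unfolding contains_def
    by (intro exI[of _ "Suc \<circ> f"]) (auto simp: strict_mono_on_def)
qed

lemma fishburn_Cons_least:
  assumes least: "\<forall>y\<in>set w. x \<le> y"
  shows "fishburn (x # w) \<longleftrightarrow> fishburn w"
proof -
  let ?bad = "\<lambda>u i j. i < j \<and> j < length u \<and> Suc i < length u \<and>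
                u ! j < u ! i \<and> u ! i < u ! Suc i \<and> u ! i = u ! j + 1"
  have not_bad0: "\<not> ?bad (x # w) 0 j" for j
  proof
    assume bad: "?bad (x # w) 0 j"
    then obtain j' where j': "j = Suc j'" "j' < length w" by (cases j) auto
    then have "x \<le> w ! j'" using least by simp
    then show False using bad j' by simp
  qed
  have "(\<exists>i j. ?bad (x # w) i j) \<longleftrightarrow> (\<exists>i j. ?bad (x # w) (Suc i) (Suc j))"
  proof
    assume "\<exists>i j. ?bad (x # w) i j"
    then obtain i j where bad: "?bad (x # w) i j" by blast
    then obtain i' where "i = Suc i'" using not_bad0 by (cases i) auto
    moreover obtain j' where "j = Suc j'" using bad by (cases j) auto
    ultimately show "\<exists>i j. ?bad (x # w) (Suc i) (Suc j)" using bad by blast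
  qed blast
  also have "\<dots> \<longleftrightarrow> (\<exists>i j. ?bad w i j)" by simp
  finally show ?thesis unfolding fishburn_def by blast
qed

lemma fishburn_map_Suc: "fishburn (map Suc w) \<longleftrightarrow> fishburn w"
  unfolding fishburn_def by (simp cong: conj_cong)

lemma perms_ofD:
  assumes "w \<in> perms_of n"
  shows "distinct w" "set w = {1..n}" "length w = n"
  using assms distinct_card[of w] by (auto simp: perms_of_def)

lemma perms_of_index:
  assumes "w \<in> perms_of n" "1 \<le> v" "v \<le> n"
  obtains p where "p < n" "w ! p = v"
  using assms perms_ofD[OF assms(1)] by (metis atLeastAtMost_iff in_set_conv_nth)

lemma finite_perms_of: "finite (perms_of n)"
proof (rule finite_subset)
  show "perms_of n \<subseteq> {xs. set xs \<subseteq> {1..n} \<and> length xs = n}"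
    by (auto simp: perms_of_def dest: distinct_card)
qed (use finite_lists_length_eq in auto)

lemma F_0_eq: "[] \<notin> set ps \<Longrightarrow> F 0 ps = {[]}"
  by (auto simp: F_def perms_of_def fishburn_def avoids_def contains_def)

definition one_oplus :: "nat list \<Rightarrow> nat list" where
  "one_oplus v = 1 # map Suc v"

lemma contains_one_oplus:
  "\<exists>b<length p. p ! b < p ! 0 \<Longrightarrow> contains (one_oplus v) p \<longleftrightarrow> contains v p"
  unfolding one_oplus_def
  by (subst contains_Cons_least) (auto simp: contains_map_strict_mono strict_mono_Suc_iff)

lemma fishburn_one_oplus: "fishburn (one_oplus v) \<longleftrightarrow> fishburn v"
  by (simp add: one_oplus_def fishburn_Cons_least fishburn_map_Suc)

lemma one_oplus_in_perms_iff: "one_oplus v \<in> perms_of (Suc n) \<longleftrightarrow> v \<in> perms_of n"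
proof -
  have set_one_oplus: "set (one_oplus v) = insert 1 (Suc ` set v)"
    by (simp add: one_oplus_def)
  have "{1..Suc n} = insert 1 (Suc ` {1..n})"
    by (simp add: image_Suc_atLeastAtMost atLeastAtMost_insertL)
  then have set_iff: "set (one_oplus v) = {1..Suc n} \<longleftrightarrow> set v = {1..n}" if "0 \<notin> set v"
    using that unfolding set_one_oplus
    by (simp add: insert_ident image_iff inj_image_eq_iff del: image_Suc_atLeastAtMost)
  have "distinct (one_oplus v) \<longleftrightarrow> distinct v \<and> 0 \<notin> set v"
    by (auto simp: one_oplus_def distinct_map)
  moreover have "0 \<notin> set v" if "set v = {1..n}" using that by auto
  ultimately show ?thesis unfolding perms_of_def using set_iff by blast
qed

lemma inj_one_oplus: "inj one_oplus"
  by (auto simp: inj_def one_oplus_def)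

lemma perms_hd_1_eq_one_oplus:
  assumes "w \<in> perms_of (Suc n)" "hd w = 1"
  shows "\<exists>v. w = one_oplus v"
proof -
  have set_w: "set w = {1..Suc n}" using assms(1) by (simp add: perms_of_def)
  then have w: "w = 1 # tl w" using assms(2) by (cases w) auto
  have "0 \<notin> set (tl w)" using set_w by (subst (asm) w) auto
  then have "Suc (x - 1) = x" if "x \<in> set (tl w)" for x
    using that by (cases x) auto
  then have "map Suc (map (\<lambda>x. x - 1) (tl w)) = tl w"
    unfolding map_map by (intro map_idI) simp
  then have "w = one_oplus (map (\<lambda>x. x - 1) (tl w))"
    unfolding one_oplus_def by (subst w) simp
  then show ?thesis ..
qed

lemma one_oplus_in_F_iff:
  assumes "\<forall>p\<in>set ps. \<exists>b<length p. p ! b < p ! 0"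
  shows "one_oplus v \<in> F (Suc n) ps \<longleftrightarrow> v \<in> F n ps"
  using assms by (simp add: F_def avoids_def one_oplus_in_perms_iff fishburn_one_oplus contains_one_oplus)

lemma F_Suc_hd_1:
  assumes "\<forall>p\<in>set ps. \<exists>b<length p. p ! b < p ! 0"
  shows "{w \<in> F (Suc n) ps. hd w = 1} = one_oplus ` F n ps"
proof (intro equalityI subsetI)
  fix w assume w: "w \<in> {w \<in> F (Suc n) ps. hd w = 1}"
  then obtain v where "w = one_oplus v"
    using perms_hd_1_eq_one_oplus[of w n] by (auto simp: F_def)
  then show "w \<in> one_oplus ` F n ps" using w one_oplus_in_F_iff[OF assms] by blast
next
  fix w assume "w \<in> one_oplus ` F n ps"
  then show "w \<in> {w \<in> F (Suc n) ps. hd w = 1}"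
    using one_oplus_in_F_iff[OF assms] by (auto simp: one_oplus_def)
qed

lemma card_F_Suc:
  assumes "\<forall>p\<in>set ps. \<exists>b<length p. p ! b < p ! 0"
  shows "card (F (Suc n) ps) = card (F n ps) + card {w \<in> F (Suc n) ps. hd w \<noteq> 1}"
proof -
  have fin: "finite (F (Suc n) ps)"
    by (rule finite_subset[OF _ finite_perms_of]) (auto simp: F_def)
  have "card (F (Suc n) ps) = card ({w \<in> F (Suc n) ps. hd w = 1} \<union> {w \<in> F (Suc n) ps. hd w \<noteq> 1})"
    by (rule arg_cong[of _ _ card]) blast
  also have "\<dots> = card {w \<in> F (Suc n) ps. hd w = 1} + card {w \<in> F (Suc n) ps. hd w \<noteq> 1}"
    using fin by (intro card_Un_disjoint) auto
  also have "card {w \<in> F (Suc n) ps. hd w = 1} = card (F n ps)"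
    unfolding F_Suc_hd_1[OF assms] by (simp add: card_image inj_on_subset[OF inj_one_oplus])
  finally show ?thesis .
qed

abbreviation F_321_2143_4123 :: "nat \<Rightarrow> nat list set" where
  "F_321_2143_4123 n \<equiv> F n [[3,2,1],[2,1,4,3],[4,1,2,3]]"

lemma mem_F_321_2143_4123_iff:
  "w \<in> F_321_2143_4123 n \<longleftrightarrow> w \<in> perms_of n \<and> fishburn w \<and>
     \<not> contains w [3,2,1] \<and> \<not> contains w [2,1,4,3] \<and> \<not> contains w [4,1,2,3]"
  by (simp add: F_def avoids_def)

lemma F_321_2143_4123D:
  assumes "w \<in> F_321_2143_4123 n"
  shows "w \<in> perms_of n" "fishburn w" "\<not> contains w [3,2,1]" "\<not> contains w [2,1,4,3]"
    "\<not> contains w [4,1,2,3]"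
  using assms unfolding mem_F_321_2143_4123_iff by simp_all

lemma fishburn_first_not_ascent:
  assumes "fishburn w" "0 < j" "j < length w" "1 < length w" "w ! 0 = w ! j + 1"
  shows "\<not> w ! 0 < w ! 1"
  using assms unfolding fishburn_def by force

lemma not_contains_321_below_first_ordered:
  assumes "\<not> contains w [3,2,1]" "i < length w" "w ! i < w ! j" "w ! j < w ! 0"
  shows "i < j"
proof (rule ccontr)
  assume "\<not> i < j"
  moreover have "i \<noteq> j" "j \<noteq> 0" using assms(3,4) by (metis less_irrefl)+
  ultimately have "0 < j" "j < i" by auto
  then show False using assms unfolding contains_321 by blast
qed

lemma not_contains_2143_above_first_ordered:
  assumes "\<not> contains w [2,1,4,3]" "w ! 1 < w ! 0" "1 < i" "i < length w"
    "w ! 0 < w ! i" "w ! i < w ! j"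
  shows "i < j"
proof (rule ccontr)
  assume "\<not> i < j"
  moreover have "i \<noteq> j" "j \<noteq> 0" "j \<noteq> 1"
    using assms(2,5,6) by (metis less_irrefl order.strict_trans One_nat_def)+
  ultimately have "1 < j" "j < i" by auto
  then show False using assms unfolding contains_2143 by blast
qed

lemma sorted_filter_drop_if_ordered:
  fixes w :: "'a::linorder list"
  assumes "distinct w"
    and ordered: "\<And>i j. k \<le> i \<Longrightarrow> i < length w \<Longrightarrow> j < length w \<Longrightarrow> P (w ! i) \<Longrightarrow> w ! i < w ! j \<Longrightarrow> i < j"
  shows "sorted_wrt (<) (filter P (drop k w))"
proof -
  have "sorted_wrt (\<lambda>x y. P x \<longrightarrow> P y \<longrightarrow> x < y) (drop k w)"
    unfolding sorted_wrt_iff_nth_less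
  proof (intro allI impI)
    fix i j assume ij: "i < j" "j < length (drop k w)" and P: "P (drop k w ! i)" "P (drop k w ! j)"
    have "w ! (k + i) \<noteq> w ! (k + j)" using assms(1) ij by (simp add: nth_eq_iff_index_eq)
    moreover have "\<not> w ! (k + j) < w ! (k + i)"
      using ordered[of "k + j" "k + i"] ij P by (auto simp: less_diff_conv add.commute)
    ultimately show "drop k w ! i < drop k w ! j" using ij by auto
  qed
  then have "sorted_wrt (\<lambda>x y. P x \<longrightarrow> P y \<longrightarrow> x < y) (filter P (drop k w))"
    by (rule sorted_wrt_filter)
  then show ?thesis by (rule sorted_wrt_mono_rel[rotated]) auto
qed

lemma sorted_eq_upt: "sorted_wrt (<) xs \<Longrightarrow> set xs = {a..<b} \<Longrightarrow> xs = [a..<b]"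
  by (simp add: strict_sorted_equal)

lemma F_321_2143_4123_first_le_3:
  assumes w: "w \<in> F_321_2143_4123 (Suc n)"
  shows "w ! 0 \<le> 3"
proof (rule ccontr)
  assume gt3: "\<not> w ! 0 \<le> 3"
  have perm: "w \<in> perms_of (Suc n)" and n321: "\<not> contains w [3,2,1]"
    and n4123: "\<not> contains w [4,1,2,3]"
    using F_321_2143_4123D[OF w] by simp_all
  have len: "length w = Suc n" using perms_ofD[OF perm] by simp
  have "w ! 0 \<le> Suc n" using perms_ofD[OF perm] nth_mem[of 0 w] by auto
  moreover obtain p1 where p1: "p1 < Suc n" "w ! p1 = 1"
    using perms_of_index[OF perm, of 1] by auto
  moreover obtain p2 where p2: "p2 < Suc n" "w ! p2 = 2"
    using perms_of_index[OF perm, of 2] gt3 calculation by auto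
  moreover obtain p3 where p3: "p3 < Suc n" "w ! p3 = 3"
    using perms_of_index[OF perm, of 3] gt3 calculation by auto
  moreover have "p1 < p2" "p2 < p3"
    using not_contains_321_below_first_ordered[OF n321] p1 p2 p3 gt3 len by simp_all
  moreover have "0 < p1" using p1 gt3 by (cases p1) auto
  ultimately have "contains w [4,1,2,3]"
    unfolding contains_4123 using gt3 len
    by (intro exI[of _ 0] exI[of _ p1] exI[of _ p2] exI[of _ p3]) auto
  with n4123 show False by contradiction
qed

lemma F_321_2143_4123_second_eq_1:
  assumes w: "w \<in> F_321_2143_4123 (Suc n)" and not1: "w ! 0 \<noteq> 1"
  shows "w ! 1 = 1"
proof -
  have perm: "w \<in> perms_of (Suc n)" and fish: "fishburn w" and n321: "\<not> contains w [3,2,1]"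
    using F_321_2143_4123D[OF w] by simp_all
  have len: "length w = Suc n" and dist: "distinct w" using perms_ofD[OF perm] by simp_all
  have range: "w ! k \<in> {1..Suc n}" if "k < Suc n" for k
    using perms_ofD(2)[OF perm] nth_mem[of k w] len that by auto
  have a: "2 \<le> w ! 0" "w ! 0 \<le> 3" using range[of 0] not1 F_321_2143_4123_first_le_3[OF w] by auto
  then have "1 \<le> n" using range[of 0] by auto
  have "1 \<le> w ! 0 - 1" "w ! 0 - 1 \<le> Suc n" using a range[of 0] by auto
  then obtain p where p: "p < Suc n" "w ! p = w ! 0 - 1" by (rule perms_of_index[OF perm])
  have "0 < p" using p a by (cases p) auto
  moreover have "w ! 0 = w ! p + 1" using p a by simp
  ultimately have "\<not> w ! 0 < w ! 1"
    using p len \<open>1 \<le> n\<close> by (intro fishburn_first_not_ascent[OF fish, of p]) auto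
  moreover have "w ! 1 \<noteq> w ! 0" using dist len \<open>1 \<le> n\<close> by (simp add: nth_eq_iff_index_eq)
  ultimately have below: "w ! 1 < w ! 0" by simp
  obtain q where q: "q < Suc n" "w ! q = 1" using perms_of_index[OF perm, of 1] by auto
  show "w ! 1 = 1"
  proof (rule ccontr)
    assume "w ! 1 \<noteq> 1"
    then have "w ! q < w ! 1" using q range[of 1] \<open>1 \<le> n\<close> by auto
    then have "q < 1" using not_contains_321_below_first_ordered[OF n321, of q 1] q below len by simp
    then show False using q not1 by simp
  qed
qed

lemma F_321_2143_4123_first_not_1E:
  assumes w: "w \<in> F_321_2143_4123 (Suc n)" and not1: "w ! 0 \<noteq> 1"
  obtains r where "w = w ! 0 # 1 # r" "distinct r" "set r = {1..Suc n} - {1, w ! 0}"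
    "sorted_wrt (<) (filter (\<lambda>y. w ! 0 < y) r)"
proof
  have perm: "w \<in> perms_of (Suc n)" and n2143: "\<not> contains w [2,1,4,3]"
    using F_321_2143_4123D[OF w] by simp_all
  have len: "length w = Suc n" and dist: "distinct w" and set_w: "set w = {1..Suc n}"
    using perms_ofD[OF perm] by simp_all
  have w1: "w ! 1 = 1" using F_321_2143_4123_second_eq_1[OF w not1] .
  have "w ! 0 \<in> {1..Suc n}" using set_w len nth_mem[of 0 w] by auto
  then have "2 \<le> length w" using not1 len by auto
  then show w_eq: "w = w ! 0 # 1 # drop 2 w"
    using w1 by (metis Cons_nth_drop_Suc One_nat_def Suc_1 drop_0 less_2_cases_iff less_le_trans)
  show "distinct (drop 2 w)" using dist by simp
  show "set (drop 2 w) = {1..Suc n} - {1, w ! 0}"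
    using dist set_w by (subst (asm) (1 2) w_eq) auto
  have "w ! 1 < w ! 0" using w1 not1 \<open>w ! 0 \<in> {1..Suc n}\<close> by auto
  then show "sorted_wrt (<) (filter (\<lambda>y. w ! 0 < y) (drop 2 w))"
    using not_contains_2143_above_first_ordered[OF n2143] by (intro sorted_filter_drop_if_ordered[OF dist]) auto
qed

definition lead2 :: "nat \<Rightarrow> nat list" where
  "lead2 n = 2 # 1 # [3..<n+2]"

definition lead3 :: "nat \<Rightarrow> nat \<Rightarrow> nat list" where
  "lead3 n t = 3 # 1 # take t [4..<n+2] @ 2 # drop t [4..<n+2]"

lemma length_lead2: "1 \<le> n \<Longrightarrow> length (lead2 n) = Suc n"
  by (simp add: lead2_def del: upt_Suc)

lemma length_lead3: "2 \<le> n \<Longrightarrow> length (lead3 n t) = Suc n"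
  by (simp add: lead3_def del: upt_Suc)

lemma nth_lead2:
  "k \<le> n \<Longrightarrow> lead2 n ! k = (if k = 0 then 2 else if k = 1 then 1 else Suc k)"
  by (auto simp: lead2_def nth_Cons' simp del: upt_Suc)

lemma nth_lead3:
  "t < n - 1 \<Longrightarrow> k \<le> n \<Longrightarrow>
    lead3 n t ! k = (if k = 0 then 3 else if k = 1 then 1 else if k < t + 2 then k + 2
                     else if k = t + 2 then 2 else Suc k)"
  by (auto simp: lead3_def nth_Cons' nth_append simp del: upt_Suc)

lemma lead2_in_perms: "1 \<le> n \<Longrightarrow> lead2 n \<in> perms_of (Suc n)"
  by (auto simp: perms_of_def lead2_def simp del: upt_Suc)

lemma lead2_in_F:
  assumes "1 \<le> n" shows "lead2 n \<in> F_321_2143_4123 (Suc n)"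
  unfolding mem_F_321_2143_4123_iff contains_321 contains_2143 contains_4123 fishburn_def
    length_lead2[OF assms]
  using assms lead2_in_perms by (auto simp: nth_lead2)

lemma lead3_in_perms:
  assumes "2 \<le> n" shows "lead3 n t \<in> perms_of (Suc n)"
proof -
  let ?xs = "[4..<n+2]"
  have "set (take t ?xs @ drop t ?xs) = {4..Suc n}" "distinct (take t ?xs @ drop t ?xs)"
    unfolding append_take_drop_id by auto
  with assms show ?thesis
    unfolding perms_of_def lead3_def by (auto dest: in_set_takeD in_set_dropD simp del: upt_Suc)
qed

lemma lead3_in_F:
  assumes "t < n - 1" shows "lead3 n t \<in> F_321_2143_4123 (Suc n)"
proof -
  have "2 \<le> n" using assms by simp
  then show ?thesis
    unfolding mem_F_321_2143_4123_iff contains_321 contains_2143 contains_4123 fishburn_def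
      length_lead3[OF \<open>2 \<le> n\<close>]
    using assms lead3_in_perms by (auto simp: nth_lead3 split: if_splits)
qed

lemma F_321_2143_4123_first_2:
  assumes w: "w \<in> F_321_2143_4123 (Suc n)" and w0: "w ! 0 = 2"
  shows "w = lead2 n"
proof -
  have "w ! 0 \<noteq> 1" using w0 by simp
  then obtain r where w_eq: "w = w ! 0 # 1 # r" and "distinct r"
    and set_r: "set r = {1..Suc n} - {1, w ! 0}"
    and sorted: "sorted_wrt (<) (filter (\<lambda>y. w ! 0 < y) r)"
    by (rule F_321_2143_4123_first_not_1E[OF w])
  have set_r': "set r = {3..<n+2}" using set_r unfolding w0 by force
  then have "filter (\<lambda>y. w ! 0 < y) r = r" unfolding w0 by (intro filter_True) auto
  then have "r = [3..<n+2]" using sorted set_r' by (intro sorted_eq_upt) simp_all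
  then show ?thesis using w_eq unfolding w0 lead2_def by simp
qed

lemma F_321_2143_4123_first_3:
  assumes w: "w \<in> F_321_2143_4123 (Suc n)" and w0: "w ! 0 = 3"
  shows "\<exists>t < n - 1. w = lead3 n t"
proof -
  have "w ! 0 \<noteq> 1" using w0 by simp
  then obtain r where w_eq: "w = w ! 0 # 1 # r" and "distinct r"
    and set_r: "set r = {1..Suc n} - {1, w ! 0}"
    and sorted: "sorted_wrt (<) (filter (\<lambda>y. w ! 0 < y) r)"
    by (rule F_321_2143_4123_first_not_1E[OF w])
  have "w ! 0 \<in> set w" using w_eq by (metis list.set_intros(1))
  then have "2 \<le> n" using perms_ofD(2)[OF F_321_2143_4123D(1)[OF w]] unfolding w0 by simp
  have set_r': "set r = insert 2 {4..<n+2}" using set_r \<open>2 \<le> n\<close> unfolding w0 by force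
  then obtain ys zs where r: "r = ys @ 2 # zs" using split_list[of 2 r] by auto
  have set_yz: "set (ys @ zs) = {4..<n+2}"
    using set_r' \<open>distinct r\<close> unfolding r by (simp add: insert_ident)
  then have "\<forall>y\<in>set (ys @ zs). 3 < y" by simp
  then have "filter (\<lambda>y. w ! 0 < y) r = ys @ zs" unfolding r w0 by simp
  with set_yz have yz: "ys @ zs = [4..<n+2]" using sorted by (intro sorted_eq_upt) simp_all
  then have "length (ys @ zs) = n - 2" by (simp del: upt_Suc)
  then have "length ys < n - 1" using \<open>2 \<le> n\<close> by simp
  moreover have "w = lead3 n (length ys)"
    using w_eq unfolding w0 r lead3_def yz[symmetric] by simp
  ultimately show ?thesis by blast
qed

lemma card_F_321_2143_4123_hd_not_1: "card {w \<in> F_321_2143_4123 (Suc n). hd w \<noteq> 1} = n"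
proof (cases "n = 0")
  case True
  have "hd w = 1" if "w \<in> F_321_2143_4123 (Suc 0)" for w
  proof -
    note perm = perms_ofD[OF F_321_2143_4123D(1)[OF that]]
    then obtain x where "w = [x]" by (metis One_nat_def length_0_conv length_Suc_conv)
    then show ?thesis using perm(2) by simp
  qed
  then have "{w \<in> F_321_2143_4123 (Suc 0). hd w \<noteq> 1} = {}" by blast
  then show ?thesis using True by (metis card.empty)
next
  case False
  have hd_eq: "hd w = w ! 0" if "w \<in> F_321_2143_4123 (Suc n)" for w
    using perms_ofD(3)[OF F_321_2143_4123D(1)[OF that]] by (cases w) auto
  have "{w \<in> F_321_2143_4123 (Suc n). hd w \<noteq> 1} = insert (lead2 n) (lead3 n ` {..<n-1})"
  proof (intro equalityI subsetI)
    fix w assume "w \<in> {w \<in> F_321_2143_4123 (Suc n). hd w \<noteq> 1}"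
    then have w: "w \<in> F_321_2143_4123 (Suc n)" and "w ! 0 \<noteq> 1" using hd_eq by auto
    moreover have "w ! 0 \<noteq> 0" using perms_ofD[OF F_321_2143_4123D(1)[OF w]]
      by (metis atLeastAtMost_iff nth_mem not_one_le_zero zero_less_Suc)
    ultimately consider "w ! 0 = 2" | "w ! 0 = 3" using F_321_2143_4123_first_le_3[OF w] by linarith
    then show "w \<in> insert (lead2 n) (lead3 n ` {..<n-1})"
      using F_321_2143_4123_first_2[OF w] F_321_2143_4123_first_3[OF w] by cases auto
  next
    fix w assume "w \<in> insert (lead2 n) (lead3 n ` {..<n-1})"
    then show "w \<in> {w \<in> F_321_2143_4123 (Suc n). hd w \<noteq> 1}"
      using False lead2_in_F lead3_in_F by (auto simp: lead2_def lead3_def)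
  qed
  moreover have "lead2 n \<notin> lead3 n ` {..<n-1}" by (auto simp: lead2_def lead3_def)
  moreover have "inj_on (lead3 n) {..<n-1}"
  proof (rule inj_onI)
    fix s t assume st: "s \<in> {..<n-1}" "t \<in> {..<n-1}" "lead3 n s = lead3 n t"
    then have "lead3 n t ! (s + 2) = 2" using nth_lead3[of s n "s + 2"] by simp
    moreover have "s + 2 \<le> n" "t < n - 1" using st by auto
    ultimately show "s = t" using nth_lead3[of t n "s + 2"] by (auto split: if_splits)
  qed
  ultimately show ?thesis using False by (simp add: card_image)
qed

theorem mainTheorem12:
  fixes n :: nat
  shows "card (F n [[3,2,1],[2,1,4,3],[4,1,2,3]]) = (n choose 2) + 1"
proof (induction n)
  case 0
  show ?case by (simp add: F_0_eq)
next
  case (Suc n)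
  have "\<forall>p\<in>set [[3,2,1],[2,1,4,3],[4,1,2,3::nat]]. \<exists>b<length p. p ! b < p ! 0"
    by (auto intro: exI[of _ 1])
  then have "card (F_321_2143_4123 (Suc n)) = card (F_321_2143_4123 n) + n"
    by (simp only: card_F_Suc card_F_321_2143_4123_hd_not_1)
  also have "\<dots> = (Suc n choose 2) + 1"
    using Suc.IH by (simp add: numeral_2_eq_2)
  finally show ?case .
qed

end
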